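(* Let $(\mathsf{E},\mathcal{F},\mu)$ be a probability space and let $P_{1},P_{2}$ be $\mu$-invariant Markov kernels on $\mathsf{E}$. Assume there is a measurable $\varepsilon:\mathsf{E}^{2}\to(0,\infty)$ such that for all $(x,A)\in\mathsf{E}\times\mathcal{F}$, \[ P_{2}(x,A\setminus\{x\})\ge\int_{A\setminus\{x\}}\varepsilon(x,y)P_{1}(x,\mathrm{d}y). \] Let $p\in(1,\infty]$ and $q\ge1$ with $p^{-1}+q^{-1}=1$, and for $s>0$ let $A(s):=\{(x,y)\in\mathsf{E}^{2}:s\,\varepsilon(x,y)>1\}$. Then for every $s>0$ and every $f\in\mathrm{L}_{0}^{2p}(\mu)$, \[ \mathcal{E}(P_{1},f)\le s\,\mathcal{E}(P_{2},f)+\mu\otimes P_{1}\big(A(s)^{\complement}\cap\{X\neq Y\}\big)^{1/q}\,\Phi_{p}(f), \] where $\Phi_{p}(f):=4\|f\|_{2p}^{2}$ if $p\in(1,\infty)$ and $\Phi_{\infty}(f):=\|f\|_{\mathrm{osc}}^{2}$.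
   Context: $\mathrm{L}^{r}(\mu)$ has norm $\|f\|_{r}=(\int|f|^{r}\mathrm{d}\mu)^{1/r}$, and $\mathrm{L}_{0}^{r}(\mu)$ consists of $f\in\mathrm{L}^{r}(\mu)$ with $\mu(f)=0$ (for $p=\infty$, $\mathrm{L}^{2p}$ means $\mathrm{L}^{\infty}$). $\|f\|_{\mathrm{osc}}:=\operatorname{ess\,sup}_{\mu}f-\operatorname{ess\,inf}_{\mu}f$. For a Markov kernel $P$, $\mathcal{E}(P,f):=\langle(\mathrm{Id}-P)f,f\rangle$ with the $\mathrm{L}^{2}(\mu)$ inner product, and $\mu\otimes P(B):=\int_{B}\mu(\mathrm{d}x)P(x,\mathrm{d}y)$ for measurable $B\subset\mathsf{E}^{2}$, with $(X,Y)$ denoting the coordinates on $\mathsf{E}^{2}$. *)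

theory Defs
  imports "HOL-Probability.Probability"
begin

definition markov_kernel :: "'a measure \<Rightarrow> ('a \<Rightarrow> 'a measure) \<Rightarrow> bool" where
  "markov_kernel M P \<longleftrightarrow> P \<in> M \<rightarrow>\<^sub>M prob_algebra M"

definition invariant_kernel :: "'a measure \<Rightarrow> ('a \<Rightarrow> 'a measure) \<Rightarrow> bool" where
  "invariant_kernel M P \<longleftrightarrow> (\<forall>A\<in>sets M. (\<integral>\<^sup>+ x. emeasure (P x) A \<partial>M) = emeasure M A)"

definition kernel_prod :: "'a measure \<Rightarrow> ('a \<Rightarrow> 'a measure) \<Rightarrow> ('a \<times> 'a) set \<Rightarrow> real" where
  "kernel_prod M P B = enn2real (\<integral>\<^sup>+ x. emeasure (P x) {y \<in> space M. (x, y) \<in> B} \<partial>M)"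

definition dirichlet_form :: "'a measure \<Rightarrow> ('a \<Rightarrow> 'a measure) \<Rightarrow> ('a \<Rightarrow> real) \<Rightarrow> real" where
  "dirichlet_form M P f = (\<integral> x. (f x - (\<integral> y. f y \<partial>P x)) * f x \<partial>M)"

definition in_Lr :: "'a measure \<Rightarrow> real \<Rightarrow> ('a \<Rightarrow> real) \<Rightarrow> bool" where
  "in_Lr M r f \<longleftrightarrow> f \<in> borel_measurable M \<and> integrable M (\<lambda>x. \<bar>f x\<bar> powr r)"

definition Lr_norm :: "'a measure \<Rightarrow> real \<Rightarrow> ('a \<Rightarrow> real) \<Rightarrow> real" where
  "Lr_norm M r f = (\<integral> x. \<bar>f x\<bar> powr r \<partial>M) powr (1 / r)"

definition in_Linf :: "'a measure \<Rightarrow> ('a \<Rightarrow> real) \<Rightarrow> bool" where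
  "in_Linf M f \<longleftrightarrow> f \<in> borel_measurable M \<and> esssup M (\<lambda>x. ereal \<bar>f x\<bar>) < \<infinity>"

text \<open>Oscillation norm: ess sup f - ess inf f, with ess inf f = - ess sup (-f).\<close>
definition osc_norm :: "'a measure \<Rightarrow> ('a \<Rightarrow> real) \<Rightarrow> real" where
  "osc_norm M f = real_of_ereal (esssup M (\<lambda>x. ereal (f x)) + esssup M (\<lambda>x. - ereal (f x)))"

definition in_L2p_0 :: "'a measure \<Rightarrow> ereal \<Rightarrow> ('a \<Rightarrow> real) \<Rightarrow> bool" where
  "in_L2p_0 M p f \<longleftrightarrow>
     (if p = \<infinity> then in_Linf M f else in_Lr M (2 * real_of_ereal p) f)
     \<and> integrable M f \<and> (\<integral> x. f x \<partial>M) = 0"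

definition Phi :: "'a measure \<Rightarrow> ereal \<Rightarrow> ('a \<Rightarrow> real) \<Rightarrow> real" where
  "Phi M p f = (if p = \<infinity> then (osc_norm M f)\<^sup>2
                else 4 * (Lr_norm M (2 * real_of_ereal p) f)\<^sup>2)"

end

theory Submission
  imports Defs
begin

text \<open>
  Let \<open>\<mu> \<otimes> P\<close> be the law of one step \<open>(X, Y)\<close> of the chain started in \<open>\<mu>\<close>. Invariance makes both
  marginals of \<open>\<mu> \<otimes> P\<close> equal to \<open>\<mu>\<close>, which yields the energy representation
  \<open>E(P, f) = 1/2 \<integral> (f Y - f X)\<^sup>2 d(\<mu> \<otimes> P)\<close>. For \<open>P\<^sub>1\<close> split the energy off the diagonal along \<open>A(s)\<close>.
  On \<open>A(s)\<close> the integrand is at most \<open>s \<epsilon> (f Y - f X)\<^sup>2\<close>, and the minorisation of \<open>P\<^sub>2\<close> by \<open>\<epsilon> P\<^sub>1\<close>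
  off the diagonal bounds its integral by \<open>s\<close> times the energy of \<open>P\<^sub>2\<close>. On the complement, Hoelder's
  inequality with exponents \<open>(q, p)\<close> leaves \<open>(\<mu> \<otimes> P\<^sub>1)(A(s)\<^sup>c \<inter> {X \<noteq> Y})\<^bsup>1/q\<^esup>\<close> times
  \<open>\<parallel>(f Y - f X)\<^sup>2\<parallel>\<^sub>p \<le> 8 \<parallel>f\<parallel>\<^sub>2\<^sub>p\<^sup>2 = 2 \<Phi>\<^sub>p(f)\<close>, again by invariance of the marginals; for
  \<open>p = \<infinity>\<close> the integrand is simply bounded by \<open>\<parallel>f\<parallel>\<^sub>o\<^sub>s\<^sub>c\<^sup>2\<close>.
\<close>

lemma abs_mult_le_sum_squares: "\<bar>a * b\<bar> \<le> a\<^sup>2 + (b :: real)\<^sup>2"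
proof -
  have "\<bar>a * b\<bar> \<le> 2 * \<bar>a\<bar> * \<bar>b\<bar>"
    by (simp add: abs_mult)
  also have "\<dots> \<le> \<bar>a\<bar>\<^sup>2 + \<bar>b\<bar>\<^sup>2"
    by (rule sum_squares_bound)
  finally show ?thesis
    by simp
qed

lemma power2_diff_powr_le:
  fixes a b t :: real
  assumes "0 \<le> t"
  shows "((a - b)\<^sup>2) powr t \<le> 2 powr (2 * t) * (\<bar>a\<bar> powr (2 * t) + \<bar>b\<bar> powr (2 * t))"
proof -
  have square: "(a - b)\<^sup>2 = \<bar>a - b\<bar> powr 2"
    by (cases "a = b") (simp_all add: powr_numeral)
  have "((a - b)\<^sup>2) powr t = \<bar>a - b\<bar> powr (2 * t)"
    unfolding square powr_powr by simp
  also have "\<dots> \<le> (2 * max \<bar>a\<bar> \<bar>b\<bar>) powr (2 * t)"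
    using assms by (intro powr_mono2) auto
  also have "\<dots> = 2 powr (2 * t) * max \<bar>a\<bar> \<bar>b\<bar> powr (2 * t)"
    by (simp add: powr_mult)
  also have "\<dots> \<le> 2 powr (2 * t) * (\<bar>a\<bar> powr (2 * t) + \<bar>b\<bar> powr (2 * t))"
    by (intro mult_left_mono) (auto simp: max_def)
  finally show ?thesis .
qed

lemma Hoelder_inequality_indicator:
  fixes h :: "'b \<Rightarrow> real"
  assumes N: "finite_measure N" and B: "B \<in> sets N" and h: "h \<in> borel_measurable N"
    and h_nonneg: "\<And>z. 0 \<le> h z" and r: "1 < r" and q: "1 < q" and rq: "1 / r + 1 / q = 1"
    and h_int: "integrable N (\<lambda>z. h z powr r)"
  shows "(\<integral>z. h z * indicator B z \<partial>N) \<le> measure N B powr (1 / q) * (\<integral>z. h z powr r \<partial>N) powr (1 / r)"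
proof -
  interpret finite_measure N by (rule N)
  define a where "a = measure N B"
  define b where "b = (\<integral>z. h z powr r \<partial>N)"
  have "0 \<le> a" "0 \<le> b"
    by (simp_all add: a_def b_def h_nonneg)
  then consider "a = 0" | "b = 0" | "0 < a" "0 < b"
    by fastforce
  then show ?thesis
  proof cases
    case 1
    then have "B \<in> null_sets N"
      using B by (simp add: a_def null_sets_def emeasure_eq_measure)
    then have "AE z in N. h z * indicator B z = 0"
      by (auto dest: AE_not_in elim!: eventually_mono)
    then show ?thesis
      by (simp add: integral_eq_zero_AE)
  next
    case 2
    have "AE z in N. h z powr r = 0"
      using 2 h_int unfolding b_def by (subst integral_nonneg_eq_0_iff_AE[symmetric]) (auto simp: h_nonneg)
    then have "AE z in N. h z * indicator B z = 0"
      by (auto elim!: eventually_mono)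
    then show ?thesis
      by (simp add: integral_eq_zero_AE)
  next
    case 3
    define \<alpha> where "\<alpha> = a powr (1 / q)"
    define \<beta> where "\<beta> = b powr (1 / r)"
    have \<alpha>: "0 < \<alpha>" "\<alpha> powr q = a" and \<beta>: "0 < \<beta>" "\<beta> powr r = b"
      using 3 q r by (simp_all add: \<alpha>_def \<beta>_def powr_powr)
    \<comment> \<open>Young's inequality applied to \<open>indicator B z / \<alpha>\<close> and \<open>h z / \<beta>\<close>\<close>
    define g where "g z = \<alpha> * \<beta> * (indicator B z / (q * a) + h z powr r / (r * b))" for z
    have h_le_g: "h z * indicator B z \<le> g z" for z
    proof -
      have "1 / q + 1 / r = 1"
        using rq by simp
      then have "(indicator B z / \<alpha>) * (h z / \<beta>) \<le> (indicator B z / \<alpha>) powr q / q + (h z / \<beta>) powr r / r"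
        by (rule Youngs_inequality[OF q r]) (use \<alpha> \<beta> h_nonneg in auto)
      also have "\<dots> = indicator B z / a / q + h z powr r / b / r"
        using \<alpha> \<beta> q h_nonneg[of z] by (simp add: powr_divide indicator_def)
      finally show ?thesis
        using \<alpha> \<beta> by (simp add: g_def field_simps)
    qed
    have B_int: "integrable N (indicator B :: 'b \<Rightarrow> real)"
      using B by (intro integrable_real_indicator) (simp_all add: less_top[symmetric])
    then have g_int: "integrable N g"
      unfolding g_def using h_int by (intro integrable_mult_right Bochner_Integration.integrable_add integrable_divide) auto
    have "(\<integral>z. h z * indicator B z \<partial>N) \<le> (\<integral>z. g z \<partial>N)"
      using g_int h_le_g h_nonneg by (intro integral_mono') (auto intro: order_trans[OF _ h_le_g])
    also have "\<dots> = \<alpha> * \<beta> * (a / (q * a) + b / (r * b))"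
      unfolding g_def a_def b_def using h_int B_int B
      by (simp add: Bochner_Integration.integral_add)
    also have "\<dots> = \<alpha> * \<beta>"
      using 3 rq by (simp add: add.commute)
    finally show ?thesis
      by (simp add: \<alpha>_def \<beta>_def a_def b_def)
  qed
qed

section \<open>Integration against a kernel\<close>

lemma integral_bind_kernel_nonneg:
  fixes g :: "'b \<Rightarrow> real"
  assumes K: "K \<in> M \<rightarrow>\<^sub>M subprob_algebra N" and g: "g \<in> borel_measurable N"
    and nonneg: "\<And>y. 0 \<le> g y" and int: "integrable (M \<bind> K) g"
  shows "AE x in M. integrable (K x) g"
    and "integrable M (\<lambda>x. \<integral>y. g y \<partial>K x)"
    and "(\<integral>y. g y \<partial>(M \<bind> K)) = (\<integral>x. \<integral>y. g y \<partial>K x \<partial>M)"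
proof -
  have g_K: "g \<in> borel_measurable (K x)" if "x \<in> space M" for x
    using g unfolding measurable_cong_sets[OF sets_kernel[OF K that] refl] .
  have inner: "(\<lambda>x. \<integral>\<^sup>+y. g y \<partial>K x) \<in> borel_measurable M"
    using measurable_compose[OF K nn_integral_measurable_subprob_algebra] g by simp
  have bind_eq: "(\<integral>\<^sup>+y. g y \<partial>(M \<bind> K)) = (\<integral>\<^sup>+x. \<integral>\<^sup>+y. g y \<partial>K x \<partial>M)"
    using g by (intro nn_integral_bind[OF _ K]) measurable
  have fin: "(\<integral>\<^sup>+y. g y \<partial>(M \<bind> K)) < \<infinity>"
    using integrableD(2)[OF int] nonneg by (simp add: less_top)
  have "AE x in M. (\<integral>\<^sup>+y. g y \<partial>K x) \<noteq> \<infinity>"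
    using inner fin by (intro nn_integral_PInf_AE) (auto simp: bind_eq)
  then show int_K: "AE x in M. integrable (K x) g"
    using AE_space by eventually_elim (auto intro!: integrableI_nonneg g_K nonneg simp: less_top)
  have "AE x in M. (\<integral>\<^sup>+y. g y \<partial>K x) = ennreal (\<integral>y. g y \<partial>K x)"
    using int_K by eventually_elim (simp add: nn_integral_eq_integral nonneg)
  then have outer: "(\<integral>\<^sup>+x. ennreal (\<integral>y. g y \<partial>K x) \<partial>M) = (\<integral>\<^sup>+y. g y \<partial>(M \<bind> K))"
    unfolding bind_eq by (rule nn_integral_cong_AE[symmetric])
  have inner_int: "(\<lambda>x. \<integral>y. g y \<partial>K x) \<in> borel_measurable M"
    using measurable_compose[OF K integral_measurable_subprob_algebra[OF g]] by simp
  show "integrable M (\<lambda>x. \<integral>y. g y \<partial>K x)"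
    using fin by (intro integrableI_nonneg inner_int) (auto simp: outer nonneg)
  show "(\<integral>y. g y \<partial>(M \<bind> K)) = (\<integral>x. \<integral>y. g y \<partial>K x \<partial>M)"
    using int inner_int
    by (simp add: integral_eq_nn_integral nonneg outer)
qed

lemma
  fixes g :: "'b \<Rightarrow> real"
  assumes K: "K \<in> M \<rightarrow>\<^sub>M subprob_algebra N" and g: "g \<in> borel_measurable N"
    and int: "integrable (M \<bind> K) g"
  shows integrable_bind_kernel: "integrable M (\<lambda>x. \<integral>y. g y \<partial>K x)"
    and integral_bind_kernel: "(\<integral>y. g y \<partial>(M \<bind> K)) = (\<integral>x. \<integral>y. g y \<partial>K x \<partial>M)"
proof -
  define pos where "pos y = max 0 (g y)" for y
  define neg where "neg y = max 0 (- g y)" for y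
  have g_eq: "g = (\<lambda>y. pos y - neg y)"
    by (auto simp: pos_def neg_def fun_eq_iff)
  have meas: "pos \<in> borel_measurable N" "neg \<in> borel_measurable N"
    using g unfolding pos_def neg_def by simp_all
  have int_pos: "integrable (M \<bind> K) pos" and int_neg: "integrable (M \<bind> K) neg"
    using int unfolding pos_def neg_def by auto
  have "0 \<le> pos y" "0 \<le> neg y" for y
    by (simp_all add: pos_def neg_def)
  note pos = integral_bind_kernel_nonneg[OF K meas(1) this(1) int_pos]
    and neg = integral_bind_kernel_nonneg[OF K meas(2) this(2) int_neg]
  have inner_meas: "(\<lambda>x. \<integral>y. h y \<partial>K x) \<in> borel_measurable M" if "h \<in> borel_measurable N" for h :: "'b \<Rightarrow> real"
    using measurable_compose[OF K integral_measurable_subprob_algebra[OF that]] by simp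
  have inner_eq: "AE x in M. (\<integral>y. g y \<partial>K x) = (\<integral>y. pos y \<partial>K x) - (\<integral>y. neg y \<partial>K x)"
    using pos(1) neg(1) by eventually_elim (simp add: g_eq)
  have cong: "integrable M (\<lambda>x. \<integral>y. g y \<partial>K x) \<longleftrightarrow>
      integrable M (\<lambda>x. (\<integral>y. pos y \<partial>K x) - (\<integral>y. neg y \<partial>K x))"
    using inner_meas[OF g] inner_meas[OF meas(1)] inner_meas[OF meas(2)] inner_eq
    by (intro integrable_cong_AE) auto
  show "integrable M (\<lambda>x. \<integral>y. g y \<partial>K x)"
    unfolding cong using pos(2) neg(2) by simp
  have "(\<integral>y. g y \<partial>(M \<bind> K)) = (\<integral>y. pos y \<partial>(M \<bind> K)) - (\<integral>y. neg y \<partial>(M \<bind> K))"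
    using int_pos int_neg unfolding g_eq by (rule Bochner_Integration.integral_diff)
  also have "\<dots> = (\<integral>x. (\<integral>y. pos y \<partial>K x) - (\<integral>y. neg y \<partial>K x) \<partial>M)"
    unfolding pos(3) neg(3) using pos(2) neg(2) by (rule Bochner_Integration.integral_diff[symmetric])
  also have "\<dots> = (\<integral>x. \<integral>y. g y \<partial>K x \<partial>M)"
    using inner_meas[OF g] inner_meas[OF meas(1)] inner_meas[OF meas(2)] inner_eq
    by (intro integral_cong_AE) auto
  finally show "(\<integral>y. g y \<partial>(M \<bind> K)) = (\<integral>x. \<integral>y. g y \<partial>K x \<partial>M)" .
qed

lemma markov_kernel_subprob: "markov_kernel M P \<Longrightarrow> P \<in> M \<rightarrow>\<^sub>M subprob_algebra M"
  unfolding markov_kernel_def by (rule measurable_prob_algebraD)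

lemma
  assumes "markov_kernel M P" and "x \<in> space M"
  shows prob_space_markov_kernel: "prob_space (P x)"
    and sets_markov_kernel: "sets (P x) = sets M"
    and space_markov_kernel: "space (P x) = space M"
proof -
  have "P x \<in> space (prob_algebra M)"
    using measurable_space[OF assms(1)[unfolded markov_kernel_def] assms(2)] .
  then show "prob_space (P x)" and "sets (P x) = sets M"
    by (auto simp: space_prob_algebra)
  then show "space (P x) = space M"
    using sets_eq_imp_space_eq by blast
qed

lemma measurable_markov_kernel:
  assumes "markov_kernel M P" and "x \<in> space M" and "f \<in> M \<rightarrow>\<^sub>M N"
  shows "f \<in> P x \<rightarrow>\<^sub>M N"
  using assms(3) unfolding measurable_cong_sets[OF sets_markov_kernel[OF assms(1,2)] refl] .

lemma bind_invariant_kernel: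
  assumes "prob_space M" and "markov_kernel M P" and "invariant_kernel M P"
  shows "M \<bind> P = M"
proof (rule measure_eqI)
  have ne: "space M \<noteq> {}"
    using assms(1) by (rule prob_space.not_empty)
  show sets: "sets (M \<bind> P) = sets M"
    using sets_bind[OF _ ne] sets_markov_kernel[OF assms(2)] by blast
  show "emeasure (M \<bind> P) A = emeasure M A" if "A \<in> sets (M \<bind> P)" for A
    using that assms(3) emeasure_bind[OF ne markov_kernel_subprob[OF assms(2)]]
    unfolding sets invariant_kernel_def by simp
qed

lemma in_Linf_square_integrable:
  assumes "finite_measure M" and "in_Linf M f"
  shows "integrable M (\<lambda>x. (f x)\<^sup>2)"
proof -
  define C where "C = esssup M (\<lambda>x. ereal \<bar>f x\<bar>)"
  have f: "f \<in> borel_measurable M" and "C < \<infinity>"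
    using assms(2) unfolding in_Linf_def C_def by auto
  have "AE x in M. ereal \<bar>f x\<bar> \<le> C"
    unfolding C_def by (rule esssup_AE)
  then have "AE x in M. norm ((f x)\<^sup>2) \<le> (real_of_ereal C)\<^sup>2"
  proof eventually_elim
    case (elim x)
    then have "\<bar>f x\<bar> \<le> real_of_ereal C"
      using \<open>C < \<infinity>\<close> by (cases C) auto
    then have "\<bar>f x\<bar>\<^sup>2 \<le> (real_of_ereal C)\<^sup>2"
      by (rule power_mono) simp
    then show ?case
      by simp
  qed
  then show ?thesis
    using assms(1) f by (intro finite_measure.integrable_const_bound) auto
qed

lemma in_Lr_square_integrable:
  assumes "finite_measure M" and "2 \<le> r" and "in_Lr M r f"
  shows "integrable M (\<lambda>x. (f x)\<^sup>2)"
proof (rule Bochner_Integration.integrable_bound)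
  interpret finite_measure M by fact
  show "integrable M (\<lambda>x. 1 + \<bar>f x\<bar> powr r)"
    using assms(3) unfolding in_Lr_def by simp
  show "(\<lambda>x. (f x)\<^sup>2) \<in> borel_measurable M"
    using assms(3) unfolding in_Lr_def by (intro borel_measurable_power) simp
  have "(f x)\<^sup>2 \<le> 1 + \<bar>f x\<bar> powr r" for x
  proof (cases "\<bar>f x\<bar> \<le> 1")
    case True
    then have "(f x)\<^sup>2 \<le> 1"
      by (simp add: abs_square_le_1)
    then show ?thesis
      by (simp add: add_increasing2)
  next
    case False
    then have "(f x)\<^sup>2 = \<bar>f x\<bar> powr 2"
      by (simp add: powr_numeral)
    also have "\<dots> \<le> \<bar>f x\<bar> powr r"
      using False assms(2) by (intro powr_mono) auto
    finally show ?thesis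
      by simp
  qed
  then show "AE x in M. norm ((f x)\<^sup>2) \<le> norm (1 + \<bar>f x\<bar> powr r)"
    by simp
qed

lemma in_L2p_0_measurable: "in_L2p_0 M p f \<Longrightarrow> f \<in> borel_measurable M"
  unfolding in_L2p_0_def in_Lr_def in_Linf_def by (auto split: if_splits)

lemma in_L2p_0_square_integrable:
  assumes "finite_measure M" and "1 < p" and "in_L2p_0 M p f"
  shows "integrable M (\<lambda>x. (f x)\<^sup>2)"
proof (cases "p = \<infinity>")
  case True
  then show ?thesis
    using assms by (intro in_Linf_square_integrable) (auto simp: in_L2p_0_def)
next
  case False
  then have "2 \<le> 2 * real_of_ereal p"
    using assms(2) by (cases p) auto
  with False show ?thesis
    using assms by (intro in_Lr_square_integrable[where r = "2 * real_of_ereal p"]) (auto simp: in_L2p_0_def)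
qed

lemma in_Linf_oscillation_bounds:
  assumes "prob_space M" and "in_Linf M f"
  obtains a b where "osc_norm M f = b - a" and "AE x in M. a \<le> f x \<and> f x \<le> b"
proof -
  interpret prob_space M by fact
  have f: "f \<in> borel_measurable M" and bounded: "esssup M (\<lambda>x. ereal \<bar>f x\<bar>) < \<infinity>"
    using assms(2) unfolding in_Linf_def by auto
  have finite: "\<bar>esssup M g\<bar> \<noteq> \<infinity>"
    if g: "g \<in> borel_measurable M" and le: "\<And>x. g x \<le> ereal \<bar>f x\<bar>" and "\<And>x. g x \<noteq> -\<infinity>" for g
  proof -
    have "esssup M g \<le> esssup M (\<lambda>x. ereal \<bar>f x\<bar>)"
      using g le by (rule esssup_mono)
    moreover have "esssup M g \<noteq> -\<infinity>"
    proof
      assume "esssup M g = -\<infinity>"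
      then have "AE x in M. False"
        using esssup_AE[of g M] \<open>\<And>x. g x \<noteq> -\<infinity>\<close> by (auto elim!: eventually_mono)
      then show False
        by simp
    qed
    ultimately show ?thesis
      using bounded by auto
  qed
  define b where "b = real_of_ereal (esssup M (\<lambda>x. ereal (f x)))"
  define a where "a = - real_of_ereal (esssup M (\<lambda>x. - ereal (f x)))"
  have sup: "esssup M (\<lambda>x. ereal (f x)) = ereal b"
    unfolding b_def using finite[of "\<lambda>x. ereal (f x)"] f by (simp add: ereal_real')
  have inf: "esssup M (\<lambda>x. - ereal (f x)) = ereal (- a)"
    unfolding a_def using finite[of "\<lambda>x. - ereal (f x)"] f by (simp add: ereal_real')
  show ?thesis
  proof
    show "osc_norm M f = b - a"
      unfolding osc_norm_def sup inf by simp
    show "AE x in M. a \<le> f x \<and> f x \<le> b"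
      using esssup_AE[of "\<lambda>x. ereal (f x)" M] esssup_AE[of "\<lambda>x. - ereal (f x)" M]
      unfolding sup inf by eventually_elim auto
  qed
qed

lemma conjugate_exponent_cases:
  fixes p :: ereal and q :: real
  assumes "1 < p" and "1 \<le> q" and "inverse p + inverse (ereal q) = 1"
  obtains "p = \<infinity>" and "q = 1"
    | r where "p = ereal r" and "1 < r" and "1 < q" and "1 / r + 1 / q = 1"
proof (cases p)
  case PInf
  then have "inverse (ereal q) = 1"
    using assms(3) by simp
  then have "q = 1"
    using assms(2) by (auto simp: one_ereal_def split: if_splits)
  with PInf that(1) show ?thesis
    by simp
next
  case (real r)
  then have r: "1 < r"
    using assms(1) by simp
  then have rq: "1 / r + 1 / q = 1"
    using assms(2,3) real by (simp add: divide_inverse one_ereal_def)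
  then have "q \<noteq> 1"
    using r by auto
  with real r rq assms(2) that(2) show ?thesis
    by simp
qed (use assms(1) in simp)

section \<open>The joint measure and the energy\<close>

definition joint_measure :: "'a measure \<Rightarrow> ('a \<Rightarrow> 'a measure) \<Rightarrow> ('a \<times> 'a) measure" where
  "joint_measure M P = M \<bind> (\<lambda>x. distr (P x) (M \<Otimes>\<^sub>M M) (Pair x))"

lemma measurable_joint_kernel:
  assumes "markov_kernel M P"
  shows "(\<lambda>x. distr (P x) (M \<Otimes>\<^sub>M M) (Pair x)) \<in> M \<rightarrow>\<^sub>M prob_algebra (M \<Otimes>\<^sub>M M)"
proof (rule measurable_distr_prob_space2[where M=M])
  show "P \<in> M \<rightarrow>\<^sub>M prob_algebra M"
    using assms unfolding markov_kernel_def .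
  show "(\<lambda>(x, y). (x, y)) \<in> M \<Otimes>\<^sub>M M \<rightarrow>\<^sub>M M \<Otimes>\<^sub>M M"
    unfolding case_prod_beta by measurable
qed

lemma sets_offdiagonal:
  assumes diag: "{(x, y) \<in> space M \<times> space M. x = y} \<in> sets (M \<Otimes>\<^sub>M M)"
    and Q: "Measurable.pred (M \<Otimes>\<^sub>M M) (\<lambda>z. Q (fst z) (snd z))"
  shows "{(x, y) \<in> space M \<times> space M. Q x y \<and> x \<noteq> y} \<in> sets (M \<Otimes>\<^sub>M M)"
proof -
  have "{(x, y) \<in> space M \<times> space M. Q x y \<and> x \<noteq> y}
      = {z \<in> space (M \<Otimes>\<^sub>M M). Q (fst z) (snd z)} - {(x, y) \<in> space M \<times> space M. x = y}"
    by (auto simp: space_pair_measure)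
  also have "\<dots> \<in> sets (M \<Otimes>\<^sub>M M)"
    using Q diag unfolding pred_def by (rule sets.Diff)
  finally show ?thesis .
qed

context
  fixes M :: "'a measure" and P :: "'a \<Rightarrow> 'a measure"
  assumes M: "prob_space M" and P: "markov_kernel M P"
begin

lemma joint_kernel_subprob:
  "(\<lambda>x. distr (P x) (M \<Otimes>\<^sub>M M) (Pair x)) \<in> M \<rightarrow>\<^sub>M subprob_algebra (M \<Otimes>\<^sub>M M)"
  using measurable_joint_kernel[OF P] by (rule measurable_prob_algebraD)

lemma measurable_Pair_markov_kernel: "x \<in> space M \<Longrightarrow> Pair x \<in> P x \<rightarrow>\<^sub>M M \<Otimes>\<^sub>M M"
  by (intro measurable_markov_kernel[OF P] measurable_Pair1')

lemma sets_joint_measure: "sets (joint_measure M P) = sets (M \<Otimes>\<^sub>M M)"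
  unfolding joint_measure_def
  by (rule sets_bind'[OF _ measurable_joint_kernel[OF P]]) (simp add: space_prob_algebra M)

lemma prob_space_joint_measure: "prob_space (joint_measure M P)"
  unfolding joint_measure_def
  by (rule prob_space_bind'[OF _ measurable_joint_kernel[OF P]]) (simp add: space_prob_algebra M)

lemma measurable_joint_measure: "f \<in> M \<Otimes>\<^sub>M M \<rightarrow>\<^sub>M N \<Longrightarrow> f \<in> joint_measure M P \<rightarrow>\<^sub>M N"
  unfolding measurable_cong_sets[OF sets_joint_measure refl] .

lemma nn_integral_joint_measure:
  assumes "g \<in> borel_measurable (M \<Otimes>\<^sub>M M)"
  shows "(\<integral>\<^sup>+z. g z \<partial>joint_measure M P) = (\<integral>\<^sup>+x. \<integral>\<^sup>+y. g (x, y) \<partial>P x \<partial>M)"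
  unfolding joint_measure_def nn_integral_bind[OF assms joint_kernel_subprob]
  using assms by (intro nn_integral_cong nn_integral_distr measurable_Pair_markov_kernel)
    (simp_all add: measurable_distr_eq1)

lemma kernel_prod_eq_measure:
  assumes B: "B \<in> sets (M \<Otimes>\<^sub>M M)"
  shows "kernel_prod M P B = measure (joint_measure M P) B"
proof -
  have "emeasure (joint_measure M P) B = (\<integral>\<^sup>+x. \<integral>\<^sup>+y. indicator B (x, y) \<partial>P x \<partial>M)"
    using B by (simp add: sets_joint_measure flip: nn_integral_joint_measure)
  also have "\<dots> = (\<integral>\<^sup>+x. emeasure (P x) {y \<in> space M. (x, y) \<in> B} \<partial>M)"
  proof (intro nn_integral_cong)
    fix x assume x: "x \<in> space M"
    have "{y \<in> space M. (x, y) \<in> B} = Pair x -` B \<inter> space (P x)"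
      using space_markov_kernel[OF P x] by auto
    also have "\<dots> \<in> sets (P x)"
      using measurable_Pair_markov_kernel[OF x] B by (rule measurable_sets)
    finally have "{y \<in> space M. (x, y) \<in> B} \<in> sets (P x)" .
    moreover have "(\<integral>\<^sup>+y. indicator B (x, y) \<partial>P x) = (\<integral>\<^sup>+y. indicator {y \<in> space M. (x, y) \<in> B} y \<partial>P x)"
      using space_markov_kernel[OF P x] by (intro nn_integral_cong) (simp add: indicator_def)
    ultimately show "(\<integral>\<^sup>+y. indicator B (x, y) \<partial>P x) = emeasure (P x) {y \<in> space M. (x, y) \<in> B}"
      by simp
  qed
  finally show ?thesis
    unfolding kernel_prod_def measure_def by simp
qed

lemma distr_joint_measure:
  assumes "f \<in> M \<Otimes>\<^sub>M M \<rightarrow>\<^sub>M N"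
  shows "distr (joint_measure M P) N f = M \<bind> (\<lambda>x. distr (P x) N (\<lambda>y. f (x, y)))"
  unfolding joint_measure_def
proof (rule trans[OF distr_bind[OF joint_kernel_subprob _ assms] bind_cong[OF refl]])
  show "space M \<noteq> {}"
    using M by (rule prob_space.not_empty)
  show "distr (distr (P x) (M \<Otimes>\<^sub>M M) (Pair x)) N f = distr (P x) N (\<lambda>y. f (x, y))"
    if "x \<in> space M" for x
    using distr_distr[OF assms measurable_Pair_markov_kernel[OF that]] by (simp add: comp_def)
qed

lemma distr_joint_measure_fst: "distr (joint_measure M P) M fst = M"
proof -
  have "distr (joint_measure M P) M fst = M \<bind> return M"
    unfolding distr_joint_measure[OF measurable_fst] fst_conv
    by (intro bind_cong refl prob_space.distr_const prob_space_markov_kernel[OF P])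
  then show ?thesis
    by (simp add: bind_return'')
qed

lemma distr_joint_measure_snd:
  assumes "invariant_kernel M P"
  shows "distr (joint_measure M P) M snd = M"
proof -
  have "distr (joint_measure M P) M snd = M \<bind> P"
    unfolding distr_joint_measure[OF measurable_snd] snd_conv
    by (intro bind_cong refl distr_id2 sets_markov_kernel[OF P, symmetric])
  then show ?thesis
    using bind_invariant_kernel[OF M P assms] by simp
qed

lemma
  fixes g :: "'a \<times> 'a \<Rightarrow> real"
  assumes int: "integrable (joint_measure M P) g"
  shows integrable_joint_measure_iterated: "integrable M (\<lambda>x. \<integral>y. g (x, y) \<partial>P x)"
    and integral_joint_measure: "(\<integral>z. g z \<partial>joint_measure M P) = (\<integral>x. \<integral>y. g (x, y) \<partial>P x \<partial>M)"
proof -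
  have g: "g \<in> borel_measurable (M \<Otimes>\<^sub>M M)"
    using borel_measurable_integrable[OF int] unfolding measurable_cong_sets[OF sets_joint_measure refl] .
  have inner: "(\<integral>z. g z \<partial>distr (P x) (M \<Otimes>\<^sub>M M) (Pair x)) = (\<integral>y. g (x, y) \<partial>P x)" if "x \<in> space M" for x
    using integral_distr[OF measurable_Pair_markov_kernel[OF that] g] .
  note bind = integrable_bind_kernel[OF joint_kernel_subprob g] integral_bind_kernel[OF joint_kernel_subprob g]
  show "integrable M (\<lambda>x. \<integral>y. g (x, y) \<partial>P x)"
    using bind(1) int unfolding joint_measure_def by (simp add: inner cong: Bochner_Integration.integrable_cong)
  show "(\<integral>z. g z \<partial>joint_measure M P) = (\<integral>x. \<integral>y. g (x, y) \<partial>P x \<partial>M)"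
    using bind(2) int unfolding joint_measure_def by (simp add: inner cong: Bochner_Integration.integral_cong)
qed

lemma
  fixes h :: "'a \<Rightarrow> real"
  assumes "integrable M h"
  shows integrable_joint_measure_fst: "integrable (joint_measure M P) (\<lambda>z. h (fst z))"
    and integral_joint_measure_fst: "(\<integral>z. h (fst z) \<partial>joint_measure M P) = (\<integral>x. h x \<partial>M)"
  using assms integrable_distr_eq[OF measurable_joint_measure[OF measurable_fst], of h]
    integral_distr[OF measurable_joint_measure[OF measurable_fst], of h]
  by (simp_all add: distr_joint_measure_fst)

lemma
  fixes h :: "'a \<Rightarrow> real"
  assumes "invariant_kernel M P" and "integrable M h"
  shows integrable_joint_measure_snd: "integrable (joint_measure M P) (\<lambda>z. h (snd z))"
    and integral_joint_measure_snd: "(\<integral>z. h (snd z) \<partial>joint_measure M P) = (\<integral>x. h x \<partial>M)"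
  using assms(2) integrable_distr_eq[OF measurable_joint_measure[OF measurable_snd], of h]
    integral_distr[OF measurable_joint_measure[OF measurable_snd], of h]
  by (simp_all add: distr_joint_measure_snd[OF assms(1)])

lemma
  assumes inv: "invariant_kernel M P"
    and f: "f \<in> borel_measurable M" and f2: "integrable M (\<lambda>x. (f x)\<^sup>2)"
  shows integrable_joint_measure_energy:
      "integrable (joint_measure M P) (\<lambda>z. (f (snd z) - f (fst z))\<^sup>2)"
    and dirichlet_form_eq_energy:
      "dirichlet_form M P f = (\<integral>z. (f (snd z) - f (fst z))\<^sup>2 \<partial>joint_measure M P) / 2"
proof -
  let ?J = "joint_measure M P"
  note sq_fst = integrable_joint_measure_fst[OF f2] integral_joint_measure_fst[OF f2]
  note sq_snd = integrable_joint_measure_snd[OF inv f2] integral_joint_measure_snd[OF inv f2]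
  have f_J: "(\<lambda>z. f (fst z)) \<in> borel_measurable ?J" "(\<lambda>z. f (snd z)) \<in> borel_measurable ?J"
    using f by (simp_all add: measurable_joint_measure)
  have cross: "integrable ?J (\<lambda>z. f (fst z) * f (snd z))"
  proof (rule Bochner_Integration.integrable_bound[OF Bochner_Integration.integrable_add[OF sq_fst(1) sq_snd(1)]])
    show "(\<lambda>z. f (fst z) * f (snd z)) \<in> borel_measurable ?J"
      using f_J by measurable
    show "AE z in ?J. norm (f (fst z) * f (snd z)) \<le> norm ((f (fst z))\<^sup>2 + (f (snd z))\<^sup>2)"
      using abs_mult_le_sum_squares by simp
  qed
  have Pf: "(\<lambda>x. \<integral>y. f (fst (x, y)) * f (snd (x, y)) \<partial>P x) = (\<lambda>x. f x * (\<integral>y. f y \<partial>P x))"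
    by simp
  note cross_M = integrable_joint_measure_iterated[OF cross, unfolded Pf]
    and cross_int = integral_joint_measure[OF cross, unfolded Pf]
  have sq_diff: "(f (snd z) - f (fst z))\<^sup>2 = (f (snd z))\<^sup>2 + (f (fst z))\<^sup>2 - 2 * (f (fst z) * f (snd z))" for z
    by (simp add: power2_diff)
  show "integrable ?J (\<lambda>z. (f (snd z) - f (fst z))\<^sup>2)"
    unfolding sq_diff using sq_fst(1) sq_snd(1) cross by simp
  have energy: "(\<integral>z. (f (snd z) - f (fst z))\<^sup>2 \<partial>?J) = 2 * (\<integral>x. (f x)\<^sup>2 \<partial>M) - 2 * (\<integral>x. f x * (\<integral>y. f y \<partial>P x) \<partial>M)"
    unfolding sq_diff using sq_fst sq_snd cross cross_int by simp
  have "dirichlet_form M P f = (\<integral>x. (f x)\<^sup>2 - f x * (\<integral>y. f y \<partial>P x) \<partial>M)"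
    unfolding dirichlet_form_def
    by (intro Bochner_Integration.integral_cong) (simp_all add: power2_eq_square algebra_simps)
  also have "\<dots> = (\<integral>x. (f x)\<^sup>2 \<partial>M) - (\<integral>x. f x * (\<integral>y. f y \<partial>P x) \<partial>M)"
    using f2 cross_M by (rule Bochner_Integration.integral_diff)
  finally show "dirichlet_form M P f = (\<integral>z. (f (snd z) - f (fst z))\<^sup>2 \<partial>?J) / 2"
    unfolding energy by simp
qed

lemma integral_split_offdiagonal:
  fixes g :: "'a \<times> 'a \<Rightarrow> real" and Q :: "'a \<Rightarrow> 'a \<Rightarrow> bool"
  assumes int: "integrable (joint_measure M P) g" and diag: "\<And>x. g (x, x) = 0"
    and A: "{(x, y) \<in> space M \<times> space M. Q x y \<and> x \<noteq> y} \<in> sets (M \<Otimes>\<^sub>M M)"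
    and B: "{(x, y) \<in> space M \<times> space M. \<not> Q x y \<and> x \<noteq> y} \<in> sets (M \<Otimes>\<^sub>M M)"
  shows "(\<integral>z. g z \<partial>joint_measure M P)
      = (\<integral>z. g z * indicator {(x, y) \<in> space M \<times> space M. Q x y \<and> x \<noteq> y} z \<partial>joint_measure M P)
        + (\<integral>z. g z * indicator {(x, y) \<in> space M \<times> space M. \<not> Q x y \<and> x \<noteq> y} z \<partial>joint_measure M P)"
proof -
  have "g z = g z * indicator {(x, y) \<in> space M \<times> space M. Q x y \<and> x \<noteq> y} z
      + g z * indicator {(x, y) \<in> space M \<times> space M. \<not> Q x y \<and> x \<noteq> y} z"
    if z: "z \<in> space (joint_measure M P)" for z
  proof -
    obtain x y where "z = (x, y)" and "x \<in> space M" and "y \<in> space M"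
      using z sets_eq_imp_space_eq[OF sets_joint_measure] by (auto simp: space_pair_measure)
    then show ?thesis
      using diag by (cases "x = y") (simp_all add: indicator_def)
  qed
  then have "(\<integral>z. g z \<partial>joint_measure M P)
      = (\<integral>z. g z * indicator {(x, y) \<in> space M \<times> space M. Q x y \<and> x \<noteq> y} z
          + g z * indicator {(x, y) \<in> space M \<times> space M. \<not> Q x y \<and> x \<noteq> y} z \<partial>joint_measure M P)"
    by (rule Bochner_Integration.integral_cong[OF refl])
  also have "\<dots> = (\<integral>z. g z * indicator {(x, y) \<in> space M \<times> space M. Q x y \<and> x \<noteq> y} z \<partial>joint_measure M P)
        + (\<integral>z. g z * indicator {(x, y) \<in> space M \<times> space M. \<not> Q x y \<and> x \<noteq> y} z \<partial>joint_measure M P)"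
    using int A B unfolding sets_joint_measure[symmetric]
    by (intro Bochner_Integration.integral_add integrable_real_mult_indicator)
  finally show ?thesis .
qed

lemma integral_energy_indicator_le_osc_norm:
  assumes inv: "invariant_kernel M P" and f: "in_Linf M f" and B: "B \<in> sets (M \<Otimes>\<^sub>M M)"
  shows "(\<integral>z. (f (snd z) - f (fst z))\<^sup>2 * indicator B z \<partial>joint_measure M P)
      \<le> measure (joint_measure M P) B * (osc_norm M f)\<^sup>2"
proof -
  let ?J = "joint_measure M P"
  interpret J: prob_space ?J
    by (rule prob_space_joint_measure)
  obtain a b where osc: "osc_norm M f = b - a" and ab: "AE x in M. a \<le> f x \<and> f x \<le> b"
    using in_Linf_oscillation_bounds[OF M f] by blast
  have "AE x in distr ?J M fst. a \<le> f x \<and> f x \<le> b"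
    unfolding distr_joint_measure_fst by (rule ab)
  then have "AE z in ?J. a \<le> f (fst z) \<and> f (fst z) \<le> b"
    by (rule AE_distrD[OF measurable_joint_measure[OF measurable_fst]])
  moreover have "AE x in distr ?J M snd. a \<le> f x \<and> f x \<le> b"
    unfolding distr_joint_measure_snd[OF inv] by (rule ab)
  then have "AE z in ?J. a \<le> f (snd z) \<and> f (snd z) \<le> b"
    by (rule AE_distrD[OF measurable_joint_measure[OF measurable_snd]])
  ultimately have "AE z in ?J. (f (snd z) - f (fst z))\<^sup>2 * indicator B z \<le> (osc_norm M f)\<^sup>2 * indicator B z"
  proof eventually_elim
    case (elim z)
    then have "\<bar>f (snd z) - f (fst z)\<bar> \<le> b - a"
      by (simp add: abs_le_iff)
    then have "\<bar>f (snd z) - f (fst z)\<bar>\<^sup>2 \<le> (b - a)\<^sup>2"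
      by (rule power_mono) simp
    then show ?case
      by (simp add: osc indicator_def)
  qed
  moreover have "integrable ?J (indicator B :: 'a \<times> 'a \<Rightarrow> real)"
    using B by (intro integrable_real_indicator) (simp_all add: sets_joint_measure less_top[symmetric])
  ultimately have "(\<integral>z. (f (snd z) - f (fst z))\<^sup>2 * indicator B z \<partial>?J)
      \<le> (\<integral>z. (osc_norm M f)\<^sup>2 * indicator B z \<partial>?J)"
    by (intro integral_mono_AE') simp_all
  also have "\<dots> = measure ?J B * (osc_norm M f)\<^sup>2"
    using B by (simp add: sets_joint_measure)
  finally show ?thesis .
qed

lemma
  assumes inv: "invariant_kernel M P" and r: "1 \<le> r" and f: "in_Lr M (2 * r) f"
  shows integrable_joint_measure_energy_powr:
      "integrable (joint_measure M P) (\<lambda>z. ((f (snd z) - f (fst z))\<^sup>2) powr r)"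
    and joint_measure_energy_powr_le:
      "(\<integral>z. ((f (snd z) - f (fst z))\<^sup>2) powr r \<partial>joint_measure M P) powr (1 / r)
        \<le> 8 * (Lr_norm M (2 * r) f)\<^sup>2"
proof -
  let ?J = "joint_measure M P"
  define N where "N = (\<integral>x. \<bar>f x\<bar> powr (2 * r) \<partial>M)"
  define bound where "bound z = 2 powr (2 * r) * (\<bar>f (snd z)\<bar> powr (2 * r) + \<bar>f (fst z)\<bar> powr (2 * r))" for z
  have [measurable]: "f \<in> borel_measurable M" and f_int: "integrable M (\<lambda>x. \<bar>f x\<bar> powr (2 * r))"
    using f unfolding in_Lr_def by auto
  note marginals = integrable_joint_measure_snd[OF inv f_int] integrable_joint_measure_fst[OF f_int]
    integral_joint_measure_snd[OF inv f_int] integral_joint_measure_fst[OF f_int]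
  have le_bound: "((f (snd z) - f (fst z))\<^sup>2) powr r \<le> bound z" for z
    unfolding bound_def using r by (intro power2_diff_powr_le) simp
  have bound_int: "integrable ?J bound"
    unfolding bound_def using marginals by simp
  show int: "integrable ?J (\<lambda>z. ((f (snd z) - f (fst z))\<^sup>2) powr r)"
  proof (rule Bochner_Integration.integrable_bound[OF bound_int])
    show "(\<lambda>z. ((f (snd z) - f (fst z))\<^sup>2) powr r) \<in> borel_measurable ?J"
      by (intro measurable_joint_measure) measurable
    show "AE z in ?J. norm (((f (snd z) - f (fst z))\<^sup>2) powr r) \<le> norm (bound z)"
      using le_bound by (intro AE_I2) (simp add: bound_def)
  qed
  have "(\<integral>z. ((f (snd z) - f (fst z))\<^sup>2) powr r \<partial>?J) \<le> (\<integral>z. bound z \<partial>?J)"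
    using int bound_int le_bound by (rule integral_mono)
  also have "\<dots> = 2 powr (2 * r) * (2 * N)"
    unfolding bound_def N_def using marginals by (simp add: Bochner_Integration.integral_add)
  finally have "(\<integral>z. ((f (snd z) - f (fst z))\<^sup>2) powr r \<partial>?J) powr (1 / r) \<le> (2 powr (2 * r) * (2 * N)) powr (1 / r)"
    using r by (intro powr_mono2) auto
  also have "\<dots> = 4 * 2 powr (1 / r) * N powr (1 / r)"
    using r by (simp add: N_def powr_mult powr_powr)
  also have "\<dots> \<le> 8 * N powr (1 / r)"
  proof -
    have "2 powr (1 / r) \<le> 2 powr 1"
      using r by (intro powr_mono) auto
    then show ?thesis
      by (simp add: N_def mult_right_mono)
  qed
  also have "N powr (1 / r) = (Lr_norm M (2 * r) f)\<^sup>2"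
    unfolding Lr_norm_def N_def power2_eq_square using r by (simp add: powr_add[symmetric])
  finally show "(\<integral>z. ((f (snd z) - f (fst z))\<^sup>2) powr r \<partial>?J) powr (1 / r) \<le> 8 * (Lr_norm M (2 * r) f)\<^sup>2" .
qed

lemma integral_energy_indicator_le_Lr_norm:
  assumes inv: "invariant_kernel M P" and r: "1 < r" and q: "1 < q" and rq: "1 / r + 1 / q = 1"
    and f: "in_Lr M (2 * r) f" and B: "B \<in> sets (M \<Otimes>\<^sub>M M)"
  shows "(\<integral>z. (f (snd z) - f (fst z))\<^sup>2 * indicator B z \<partial>joint_measure M P)
      \<le> 8 * measure (joint_measure M P) B powr (1 / q) * (Lr_norm M (2 * r) f)\<^sup>2"
proof -
  let ?J = "joint_measure M P"
  interpret J: prob_space ?J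
    by (rule prob_space_joint_measure)
  have [measurable]: "f \<in> borel_measurable M"
    using f unfolding in_Lr_def by simp
  have "(\<integral>z. (f (snd z) - f (fst z))\<^sup>2 * indicator B z \<partial>?J)
      \<le> measure ?J B powr (1 / q) * (\<integral>z. ((f (snd z) - f (fst z))\<^sup>2) powr r \<partial>?J) powr (1 / r)"
    using B r q rq integrable_joint_measure_energy_powr[OF inv _ f]
    by (intro Hoelder_inequality_indicator J.finite_measure_axioms measurable_joint_measure)
      (simp_all add: sets_joint_measure)
  also have "\<dots> \<le> measure ?J B powr (1 / q) * (8 * (Lr_norm M (2 * r) f)\<^sup>2)"
    using joint_measure_energy_powr_le[OF inv _ f] r by (intro mult_left_mono) simp_all
  finally show ?thesis
    by simp
qed

lemma integral_energy_indicator_le_Phi: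
  assumes inv: "invariant_kernel M P" and p: "1 < p" and q: "1 \<le> q"
    and pq: "inverse p + inverse (ereal q) = 1" and f: "in_L2p_0 M p f" and B: "B \<in> sets (M \<Otimes>\<^sub>M M)"
  shows "(\<integral>z. (f (snd z) - f (fst z))\<^sup>2 * indicator B z \<partial>joint_measure M P)
      \<le> 2 * measure (joint_measure M P) B powr (1 / q) * Phi M p f"
  using p q pq
proof (cases rule: conjugate_exponent_cases)
  case 1
  then have "in_Linf M f"
    using f by (simp add: in_L2p_0_def)
  then have "(\<integral>z. (f (snd z) - f (fst z))\<^sup>2 * indicator B z \<partial>joint_measure M P)
      \<le> measure (joint_measure M P) B * (osc_norm M f)\<^sup>2"
    using inv B by (intro integral_energy_indicator_le_osc_norm)
  also have "\<dots> \<le> 2 * (measure (joint_measure M P) B * (osc_norm M f)\<^sup>2)"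
    by simp
  finally show ?thesis
    using 1 by (simp add: Phi_def powr_one)
next
  case (2 r)
  then have "in_Lr M (2 * r) f"
    using f by (simp add: in_L2p_0_def)
  then have "(\<integral>z. (f (snd z) - f (fst z))\<^sup>2 * indicator B z \<partial>joint_measure M P)
      \<le> 8 * measure (joint_measure M P) B powr (1 / q) * (Lr_norm M (2 * r) f)\<^sup>2"
    using inv 2 B by (intro integral_energy_indicator_le_Lr_norm)
  then show ?thesis
    using 2 by (simp add: Phi_def)
qed

end

section \<open>Minorisation\<close>

lemma nn_integral_minorized_kernel:
  fixes e :: "'a \<Rightarrow> real" and h :: "'a \<Rightarrow> ennreal"
  assumes P1: "markov_kernel M P1" and P2: "markov_kernel M P2" and x: "x \<in> space M"
    and e: "e \<in> borel_measurable M" and h: "h \<in> borel_measurable M" and singleton: "{x} \<in> sets M"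
    and minor: "\<And>A. A \<in> sets M \<Longrightarrow> (\<integral>\<^sup>+y\<in>A - {x}. ennreal (e y) \<partial>P1 x) \<le> emeasure (P2 x) (A - {x})"
  shows "(\<integral>\<^sup>+y. ennreal (e y) * indicator (space M - {x}) y * h y \<partial>P1 x)
      \<le> (\<integral>\<^sup>+y. indicator (space M - {x}) y * h y \<partial>P2 x)"
proof -
  define d1 where "d1 y = ennreal (e y) * indicator (space M - {x}) y" for y
  define d2 where "d2 y = (indicator (space M - {x}) y :: ennreal)" for y
  have sets: "sets (P1 x) = sets M" "sets (P2 x) = sets M"
    using sets_markov_kernel[OF P1 x] sets_markov_kernel[OF P2 x] .
  have "space M - {x} \<in> sets M"
    using sets.top singleton by (rule sets.Diff)
  then have "d1 \<in> borel_measurable M" "d2 \<in> borel_measurable M"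
    using e unfolding d1_def d2_def by measurable
  note meas = measurable_markov_kernel[OF P1 x this(1)] measurable_markov_kernel[OF P2 x this(2)]
    measurable_markov_kernel[OF P1 x h] measurable_markov_kernel[OF P2 x h]
  have "emeasure (density (P1 x) d1) A \<le> emeasure (density (P2 x) d2) A" for A
  proof (cases "A \<in> sets M")
    case A: True
    have "emeasure (density (P1 x) d1) A = (\<integral>\<^sup>+y\<in>A - {x}. ennreal (e y) \<partial>P1 x)"
      using sets.sets_into_space[OF A] unfolding emeasure_density[OF meas(1) A[folded sets(1)]] d1_def
      by (intro nn_integral_cong) (auto simp: indicator_def)
    also have "\<dots> \<le> emeasure (P2 x) (A - {x})"
      using A by (rule minor)
    also have "\<dots> = (\<integral>\<^sup>+y. indicator (A - {x}) y \<partial>P2 x)"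
      using A singleton sets(2) by simp
    also have "\<dots> = emeasure (density (P2 x) d2) A"
      using sets.sets_into_space[OF A] unfolding emeasure_density[OF meas(2) A[folded sets(2)]] d2_def
      by (intro nn_integral_cong) (auto simp: indicator_def)
    finally show ?thesis .
  qed (simp add: emeasure_notin_sets sets)
  moreover have sets_density: "sets (density (P1 x) d1) = sets (density (P2 x) d2)"
    by (simp add: sets)
  ultimately have "density (P1 x) d1 \<le> density (P2 x) d2"
    unfolding le_measure_iff le_fun_def using sets_eq_imp_space_eq[OF sets_density] by simp
  then have "(\<integral>\<^sup>+y. h y \<partial>density (P1 x) d1) \<le> (\<integral>\<^sup>+y. h y \<partial>density (P2 x) d2)"
    using sets_density by (intro nn_integral_mono_measure) simp_all
  then show ?thesis
    unfolding nn_integral_density[OF meas(1,3)] nn_integral_density[OF meas(2,4)] d1_def d2_def .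
qed

lemma nn_integral_joint_measure_minorized:
  fixes M :: "'a measure" and eps :: "'a \<Rightarrow> 'a \<Rightarrow> real" and h :: "'a \<times> 'a \<Rightarrow> ennreal"
  defines "Off \<equiv> {(x, y) \<in> space M \<times> space M. x \<noteq> y}"
  assumes M: "prob_space M" and P1: "markov_kernel M P1" and P2: "markov_kernel M P2"
    and diag: "{(x, y) \<in> space M \<times> space M. x = y} \<in> sets (M \<Otimes>\<^sub>M M)"
    and eps: "(\<lambda>(x, y). eps x y) \<in> borel_measurable (M \<Otimes>\<^sub>M M)"
    and minor: "\<And>x A. x \<in> space M \<Longrightarrow> A \<in> sets M \<Longrightarrow>
        (\<integral>\<^sup>+y\<in>A - {x}. ennreal (eps x y) \<partial>P1 x) \<le> emeasure (P2 x) (A - {x})"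
    and h: "h \<in> borel_measurable (M \<Otimes>\<^sub>M M)"
  shows "(\<integral>\<^sup>+z. ennreal (eps (fst z) (snd z)) * indicator Off z * h z \<partial>joint_measure M P1)
      \<le> (\<integral>\<^sup>+z. indicator Off z * h z \<partial>joint_measure M P2)"
proof -
  have [measurable]: "Off \<in> sets (M \<Otimes>\<^sub>M M)"
    using sets_offdiagonal[OF diag, of "\<lambda>_ _. True"] unfolding Off_def by simp
  have eps_fst_snd[measurable]: "(\<lambda>z. eps (fst z) (snd z)) \<in> borel_measurable (M \<Otimes>\<^sub>M M)"
    using eps by (simp add: case_prod_beta')
  note h[measurable]
  have "(\<integral>\<^sup>+y. ennreal (eps x y) * indicator Off (x, y) * h (x, y) \<partial>P1 x)
      \<le> (\<integral>\<^sup>+y. indicator Off (x, y) * h (x, y) \<partial>P2 x)" if x: "x \<in> space M" for x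
  proof -
    have Off_x: "indicator Off (x, y) = indicator (space M - {x}) y" if "y \<in> space M" for y
      using x that by (simp add: Off_def indicator_def)
    have "Pair x -` {(x, y) \<in> space M \<times> space M. x = y} = {x}"
      using x by auto
    then have "{x} \<in> sets M"
      using sets_Pair1[OF diag, of x] by simp
    moreover have "(\<lambda>y. eps x y) \<in> borel_measurable M" "(\<lambda>y. h (x, y)) \<in> borel_measurable M"
      using measurable_compose[OF measurable_Pair1'[OF x] eps_fst_snd]
        measurable_compose[OF measurable_Pair1'[OF x] h] by simp_all
    ultimately have "(\<integral>\<^sup>+y. ennreal (eps x y) * indicator (space M - {x}) y * h (x, y) \<partial>P1 x)
        \<le> (\<integral>\<^sup>+y. indicator (space M - {x}) y * h (x, y) \<partial>P2 x)"
      using nn_integral_minorized_kernel[OF P1 P2 x _ _ _ minor[OF x]] by blast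
    moreover have "(\<integral>\<^sup>+y. ennreal (eps x y) * indicator Off (x, y) * h (x, y) \<partial>P1 x)
        = (\<integral>\<^sup>+y. ennreal (eps x y) * indicator (space M - {x}) y * h (x, y) \<partial>P1 x)"
      by (intro nn_integral_cong) (simp add: Off_x space_markov_kernel[OF P1 x])
    moreover have "(\<integral>\<^sup>+y. indicator Off (x, y) * h (x, y) \<partial>P2 x)
        = (\<integral>\<^sup>+y. indicator (space M - {x}) y * h (x, y) \<partial>P2 x)"
      by (intro nn_integral_cong) (simp add: Off_x space_markov_kernel[OF P2 x])
    ultimately show ?thesis
      by simp
  qed
  note pointwise = this
  have meas: "(\<lambda>z. ennreal (eps (fst z) (snd z)) * indicator Off z * h z) \<in> borel_measurable (M \<Otimes>\<^sub>M M)"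
    "(\<lambda>z. indicator Off z * h z) \<in> borel_measurable (M \<Otimes>\<^sub>M M)"
    by measurable
  have "(\<integral>\<^sup>+z. ennreal (eps (fst z) (snd z)) * indicator Off z * h z \<partial>joint_measure M P1)
      = (\<integral>\<^sup>+x. \<integral>\<^sup>+y. ennreal (eps x y) * indicator Off (x, y) * h (x, y) \<partial>P1 x \<partial>M)"
    using nn_integral_joint_measure[OF M P1 meas(1)] by simp
  also have "\<dots> \<le> (\<integral>\<^sup>+x. \<integral>\<^sup>+y. indicator Off (x, y) * h (x, y) \<partial>P2 x \<partial>M)"
    using pointwise by (rule nn_integral_mono)
  also have "\<dots> = (\<integral>\<^sup>+z. indicator Off z * h z \<partial>joint_measure M P2)"
    using nn_integral_joint_measure[OF M P2 meas(2)] by simp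
  finally show ?thesis .
qed

lemma nn_integral_above_threshold_le:
  fixes M :: "'a measure" and s :: real and eps :: "'a \<Rightarrow> 'a \<Rightarrow> real" and h :: "'a \<times> 'a \<Rightarrow> ennreal"
  assumes M: "prob_space M" and P1: "markov_kernel M P1" and P2: "markov_kernel M P2"
    and diag: "{(x, y) \<in> space M \<times> space M. x = y} \<in> sets (M \<Otimes>\<^sub>M M)"
    and eps: "(\<lambda>(x, y). eps x y) \<in> borel_measurable (M \<Otimes>\<^sub>M M)"
    and minor: "\<And>x A. x \<in> space M \<Longrightarrow> A \<in> sets M \<Longrightarrow>
        (\<integral>\<^sup>+y\<in>A - {x}. ennreal (eps x y) \<partial>P1 x) \<le> emeasure (P2 x) (A - {x})"
    and s: "0 \<le> s" and h: "h \<in> borel_measurable (M \<Otimes>\<^sub>M M)"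
  shows "(\<integral>\<^sup>+z. h z * indicator {(x, y) \<in> space M \<times> space M. 1 < s * eps x y \<and> x \<noteq> y} z \<partial>joint_measure M P1)
      \<le> ennreal s * (\<integral>\<^sup>+z. h z \<partial>joint_measure M P2)"
proof -
  define Off where "Off = {(x, y) \<in> space M \<times> space M. x \<noteq> y}"
  have [measurable]: "(\<lambda>z. eps (fst z) (snd z)) \<in> borel_measurable (M \<Otimes>\<^sub>M M)"
    using eps by (simp add: case_prod_beta')
  have [measurable]: "Off \<in> sets (M \<Otimes>\<^sub>M M)"
    using sets_offdiagonal[OF diag, of "\<lambda>_ _. True"] unfolding Off_def by simp
  note h[measurable]
  have "h z * indicator {(x, y) \<in> space M \<times> space M. 1 < s * eps x y \<and> x \<noteq> y} z
      \<le> ennreal s * (ennreal (eps (fst z) (snd z)) * indicator Off z * h z)" for z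
  proof (cases z)
    case (Pair x y)
    have "h z \<le> ennreal (s * eps x y) * h z" if "1 < s * eps x y"
    proof -
      have "1 \<le> ennreal (s * eps x y)"
        using ennreal_leI[of 1 "s * eps x y"] that by simp
      then have "1 * h z \<le> ennreal (s * eps x y) * h z"
        by (rule mult_right_mono) simp
      then show ?thesis
        by simp
    qed
    then show ?thesis
      using s by (auto simp: Pair Off_def indicator_def ennreal_mult' mult.assoc)
  qed
  then have "(\<integral>\<^sup>+z. h z * indicator {(x, y) \<in> space M \<times> space M. 1 < s * eps x y \<and> x \<noteq> y} z \<partial>joint_measure M P1)
      \<le> ennreal s * (\<integral>\<^sup>+z. ennreal (eps (fst z) (snd z)) * indicator Off z * h z \<partial>joint_measure M P1)"
    by (subst nn_integral_cmult[symmetric]) (auto intro: nn_integral_mono measurable_joint_measure[OF M P1])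
  also have "\<dots> \<le> ennreal s * (\<integral>\<^sup>+z. indicator Off z * h z \<partial>joint_measure M P2)"
    unfolding Off_def
    by (intro mult_left_mono nn_integral_joint_measure_minorized[OF M P1 P2 diag eps _ h])
      ((rule minor; assumption), simp)
  also have "\<dots> \<le> ennreal s * (\<integral>\<^sup>+z. h z \<partial>joint_measure M P2)"
    by (intro mult_left_mono nn_integral_mono) (simp_all add: indicator_def)
  finally show ?thesis .
qed

lemma integral_above_threshold_le:
  fixes M :: "'a measure" and s :: real and eps :: "'a \<Rightarrow> 'a \<Rightarrow> real" and g :: "'a \<times> 'a \<Rightarrow> real"
  assumes M: "prob_space M" and P1: "markov_kernel M P1" and P2: "markov_kernel M P2"
    and diag: "{(x, y) \<in> space M \<times> space M. x = y} \<in> sets (M \<Otimes>\<^sub>M M)"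
    and eps: "(\<lambda>(x, y). eps x y) \<in> borel_measurable (M \<Otimes>\<^sub>M M)"
    and minor: "\<And>x A. x \<in> space M \<Longrightarrow> A \<in> sets M \<Longrightarrow>
        (\<integral>\<^sup>+y\<in>A - {x}. ennreal (eps x y) \<partial>P1 x) \<le> emeasure (P2 x) (A - {x})"
    and s: "0 \<le> s" and g: "g \<in> borel_measurable (M \<Otimes>\<^sub>M M)" and g_nonneg: "\<And>z. 0 \<le> g z"
    and g_int: "integrable (joint_measure M P2) g"
  shows "(\<integral>z. g z * indicator {(x, y) \<in> space M \<times> space M. 1 < s * eps x y \<and> x \<noteq> y} z \<partial>joint_measure M P1)
      \<le> s * (\<integral>z. g z \<partial>joint_measure M P2)"
proof -
  define A where "A = {(x, y) \<in> space M \<times> space M. 1 < s * eps x y \<and> x \<noteq> y}"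
  have [measurable]: "A \<in> sets (M \<Otimes>\<^sub>M M)"
    unfolding A_def using eps by (intro sets_offdiagonal[OF diag]) (simp add: case_prod_beta')
  note g[measurable]
  have "(\<integral>\<^sup>+z. ennreal (g z * indicator A z) \<partial>joint_measure M P1)
      = (\<integral>\<^sup>+z. ennreal (g z) * indicator A z \<partial>joint_measure M P1)"
    by (intro nn_integral_cong) (simp add: indicator_def)
  also have "\<dots> \<le> ennreal s * (\<integral>\<^sup>+z. ennreal (g z) \<partial>joint_measure M P2)"
    unfolding A_def using M P1 P2 diag eps minor s measurable_compose[OF g measurable_ennreal]
    by (rule nn_integral_above_threshold_le)
  also have "\<dots> = ennreal (s * (\<integral>z. g z \<partial>joint_measure M P2))"
    using g_int g_nonneg s by (simp add: nn_integral_eq_integral ennreal_mult)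
  finally have "enn2real (\<integral>\<^sup>+z. ennreal (g z * indicator A z) \<partial>joint_measure M P1)
      \<le> s * (\<integral>z. g z \<partial>joint_measure M P2)"
    using s g_nonneg by (intro enn2real_leI) simp_all
  then show ?thesis
    unfolding A_def[symmetric]
    by (subst integral_eq_nn_integral) (auto intro: measurable_joint_measure[OF M P1] simp: g_nonneg)
qed

theorem theorem36:
  fixes M :: "'a measure" and P1 P2 :: "'a \<Rightarrow> 'a measure"
    and eps :: "'a \<Rightarrow> 'a \<Rightarrow> real" and p :: ereal and q :: real
  assumes "prob_space M"
    and "markov_kernel M P1" and "markov_kernel M P2"
    and "invariant_kernel M P1" and "invariant_kernel M P2"
    and diag: "{(x, y) \<in> space M \<times> space M. x = y} \<in> sets (M \<Otimes>\<^sub>M M)"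
    and eps_meas: "(\<lambda>(x, y). eps x y) \<in> borel_measurable (M \<Otimes>\<^sub>M M)"
    and eps_pos: "\<And>x y. x \<in> space M \<Longrightarrow> y \<in> space M \<Longrightarrow> eps x y > 0"
    and minor: "\<And>x A. x \<in> space M \<Longrightarrow> A \<in> sets M \<Longrightarrow>
        emeasure (P2 x) (A - {x}) \<ge> (\<integral>\<^sup>+ y \<in> A - {x}. ennreal (eps x y) \<partial>P1 x)"
    and "1 < p" and "1 \<le> q"
    and "inverse p + inverse (ereal q) = 1"
    and "s > 0"
    and "in_L2p_0 M p f"
  shows "dirichlet_form M P1 f \<le> s * dirichlet_form M P2 f
           + kernel_prod M P1 {(x, y) \<in> space M \<times> space M. \<not> (s * eps x y > 1) \<and> x \<noteq> y} powr (1 / q)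
             * Phi M p f"
proof -
  note M = assms(1) and P1 = assms(2) and P2 = assms(3) and inv1 = assms(4) and inv2 = assms(5)
  define D where "D z = (f (snd z) - f (fst z))\<^sup>2" for z
  define A where "A = {(x, y) \<in> space M \<times> space M. 1 < s * eps x y \<and> x \<noteq> y}"
  define B where "B = {(x, y) \<in> space M \<times> space M. \<not> (s * eps x y > 1) \<and> x \<noteq> y}"
  have f[measurable]: "f \<in> borel_measurable M"
    using assms(14) by (rule in_L2p_0_measurable)
  have f2: "integrable M (\<lambda>x. (f x)\<^sup>2)"
    using prob_space.finite_measure[OF M] assms(10,14) by (rule in_L2p_0_square_integrable)
  note E1 = dirichlet_form_eq_energy[OF M P1 inv1 f f2, folded D_def]
    and E2 = dirichlet_form_eq_energy[OF M P2 inv2 f f2, folded D_def]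
    and D_int = integrable_joint_measure_energy[OF M P1 inv1 f f2, folded D_def]
      integrable_joint_measure_energy[OF M P2 inv2 f f2, folded D_def]
  have [measurable]: "(\<lambda>z. eps (fst z) (snd z)) \<in> borel_measurable (M \<Otimes>\<^sub>M M)"
    using eps_meas by (simp add: case_prod_beta')
  have A_meas: "A \<in> sets (M \<Otimes>\<^sub>M M)" and B_meas: "B \<in> sets (M \<Otimes>\<^sub>M M)"
    unfolding A_def B_def by (rule sets_offdiagonal[OF diag], measurable)+
  have "(\<integral>z. D z \<partial>joint_measure M P1)
      = (\<integral>z. D z * indicator A z \<partial>joint_measure M P1) + (\<integral>z. D z * indicator B z \<partial>joint_measure M P1)"
    using integral_split_offdiagonal[OF M P1 D_int(1) _ A_meas[unfolded A_def] B_meas[unfolded B_def]]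
    unfolding A_def B_def by (simp add: D_def)
  moreover have "(\<integral>z. D z * indicator A z \<partial>joint_measure M P1) \<le> s * (\<integral>z. D z \<partial>joint_measure M P2)"
    unfolding A_def using M P1 P2 diag eps_meas minor less_imp_le[OF assms(13)] D_int(2)
    by (intro integral_above_threshold_le) (simp_all add: D_def)
  moreover have "(\<integral>z. D z * indicator B z \<partial>joint_measure M P1)
      \<le> 2 * kernel_prod M P1 B powr (1 / q) * Phi M p f"
    unfolding kernel_prod_eq_measure[OF M P1 B_meas] D_def
    using M P1 inv1 assms(10-12,14) B_meas by (rule integral_energy_indicator_le_Phi)
  ultimately show ?thesis
    unfolding E1 E2 B_def by simp
qed

end
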